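(* For every positive integer $n$, $\mathrm{Sort}_n(\mathrm{SC}_{3\underline{21}})=\mathrm{Av}_n(123,132)$, the set of permutations in $\mathfrak S_n$ avoiding both classical patterns $123$ and $132$.
   Context: $\mathfrak S_n$ is the set of permutations of $\{1,\dots,n\}$. A vincular pattern is a permutation with some entries underlined; a sequence contains it if it has a subsequence with the same relative order in which entries corresponding to adjacent underlined entries occupy consecutive positions. An occurrence of $3\underline{21}$ is $a_i a_j a_{j+1}$ with $i<j$ and $a_{j+1}<a_j<a_i$. Classical patterns have no underlining. For a pattern $\sigma$, the map $\mathrm{SC}_\sigma$ acts on $\tau$: read entries left to right; when the next entry $x$ is read, if pushing $x$ yields a stack whose entries read top to bottom (stack adjacency = consecutive positions) avoid $\sigma$, push $x$; otherwise pop the top stack entry to the output and repeat. At the end pop all remaining entries; the output is $\mathrm{SC}_\sigma(\tau)$. West's stack-sorting map is $s=\mathrm{SC}_{21}$. $\mathrm{Sort}_n(\mathrm{SC}_\sigma)=\{\tau\in\mathfrak S_n : s(\mathrm{SC}_\sigma(\tau))=12\cdots n\}$. *)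

theory Defs
  imports Main
begin

definition perms :: "nat \<Rightarrow> nat list set" where
  "perms n = {w. distinct w \<and> set w = {1..n}}"

definition occurs_at :: "nat list \<Rightarrow> nat list \<Rightarrow> (nat \<Rightarrow> nat) \<Rightarrow> bool" where
  "occurs_at p w f \<longleftrightarrow>
     (\<forall>i j. i < j \<and> j < length p \<longrightarrow> f i < f j) \<and>
     (\<forall>i < length p. f i < length w) \<and>
     (\<forall>i < length p. \<forall>j < length p. (p ! i < p ! j) = (w ! (f i) < w ! (f j)))"

definition contains :: "nat list \<Rightarrow> nat list \<Rightarrow> bool" where
  "contains p w \<longleftrightarrow> (\<exists>f. occurs_at p w f)"

text \<open>Vincular pattern containment: A is the set of (0-based) pattern indices i such that
  entries i and i+1 of the pattern are both underlined and adjacent, so their images must be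
  consecutive positions.\<close>
definition contains_vinc :: "nat list \<Rightarrow> nat set \<Rightarrow> nat list \<Rightarrow> bool" where
  "contains_vinc p A w \<longleftrightarrow>
     (\<exists>f. occurs_at p w f \<and> (\<forall>i\<in>A. Suc i < length p \<longrightarrow> f (Suc i) = Suc (f i)))"

text \<open>The stack is a list whose head is the top, so the list
  reads the stack top to bottom. \<open>sc ok input stack\<close> returns the output produced.
  \<open>ok\<close> tests whether a stack content (top to bottom) is admissible.
  Pushing onto the empty stack gives a one-element stack, which avoids every pattern of length
  at least 2, so it is always allowed.\<close>
fun sc :: "(nat list \<Rightarrow> bool) \<Rightarrow> nat list \<Rightarrow> nat list \<Rightarrow> nat list" where
  "sc ok [] st = st"
| "sc ok (x # xs) [] = sc ok xs [x]"
| "sc ok (x # xs) (y # st) =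
     (if ok (x # y # st) then sc ok xs (x # y # st) else y # sc ok (x # xs) (st))"

definition SC :: "nat list \<Rightarrow> nat set \<Rightarrow> nat list \<Rightarrow> nat list" where
  "SC p A \<tau> = sc (\<lambda>st. \<not> contains_vinc p A st) \<tau> []"

definition west_s :: "nat list \<Rightarrow> nat list" where
  "west_s \<tau> = SC [2, 1] {} \<tau>"

text \<open>The pattern 3_21 (entries 2 and 1 underlined): [3,2,1] with pattern indices 1,2 adjacent.\<close>
definition SC_3_21 :: "nat list \<Rightarrow> nat list" where
  "SC_3_21 \<tau> = SC [3, 2, 1] {1} \<tau>"

definition Sort_SC_3_21 :: "nat \<Rightarrow> nat list set" where
  "Sort_SC_3_21 n = {\<tau> \<in> perms n. west_s (SC_3_21 \<tau>) = [1..<n+1]}"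

definition Av :: "nat \<Rightarrow> nat list list \<Rightarrow> nat list set" where
  "Av n ps = {w \<in> perms n. \<forall>p \<in> set ps. \<not> contains p w}"

end

theory Submission
  imports Defs "HOL-Library.Sublist" "HOL-Library.Multiset"
begin

text \<open>
  West's map \<open>s\<close> sorts a sequence exactly when it avoids 231.
  If \<open>\<tau>\<close> avoids 123, the 3_21-machine never pops before the end: the stack is the
  reversed prefix read so far, and an occurrence of 3_21 in it would be a 123 in \<open>\<tau>\<close>.
  So \<open>SC(\<tau>)\<close> is the reverse of \<open>\<tau>\<close>, which avoids 231 iff \<open>\<tau>\<close> avoids 132.

  Conversely, if \<open>\<tau>\<close> contains 123 or 132, let \<open>a\<close> be the leftmost entry followed by two
  larger entries, and \<open>b\<close>, \<open>c\<close> the first two such entries. When \<open>a\<close> is pushed, every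
  entry below it is larger than \<open>a\<close>, and \<open>b\<close> and \<open>c\<close> may be pushed directly onto \<open>a\<close>: a
  descent in the stack below \<open>a\<close> topped by an entry smaller than \<open>b\<close> would give an entry left
  of \<open>a\<close> followed by two larger ones. The entries between them are smaller than \<open>a\<close> and
  stay above \<open>a\<close>. Following \<open>b\<close> and \<open>c\<close> through the machine, the output contains
  \<open>c b a\<close> if \<open>c < b\<close> and \<open>b c a\<close> if \<open>b < c\<close>; both are occurrences of 231.
\<close>

section \<open>Subsequences and classical patterns\<close>

lemma subseq_imp_nth_embedding:
  assumes "subseq xs ys"
  shows "\<exists>f. (\<forall>i j. i < j \<and> j < length xs \<longrightarrow> f i < f j) \<and>
             (\<forall>i < length xs. f i < length ys \<and> ys ! f i = xs ! i)"
  using assms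
proof (induction xs arbitrary: ys)
  case (Cons x xs)
  then obtain us vs where ys: "ys = us @ x # vs" and "subseq xs vs"
    by (auto dest: list_emb_ConsD)
  then obtain g where g: "\<forall>i j. i < j \<and> j < length xs \<longrightarrow> g i < g j"
    "\<forall>i < length xs. g i < length vs \<and> vs ! g i = xs ! i"
    using Cons.IH by blast
  define f where "f i = (case i of 0 \<Rightarrow> length us | Suc k \<Rightarrow> Suc (length us + g k))" for i
  have "\<forall>i j. i < j \<and> j < length (x # xs) \<longrightarrow> f i < f j"
    using g(1) by (auto simp: f_def split: nat.split)
  moreover have "\<forall>i < length (x # xs). f i < length ys \<and> ys ! f i = (x # xs) ! i"
    using g(2) by (auto simp: f_def ys nth_append split: nat.split)
  ultimately show ?case by blast
qed simp

lemma nth_embedding_imp_subseq: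
  assumes "\<forall>i j. i < j \<and> j < length xs \<longrightarrow> f i < f j"
    and "\<forall>i < length xs. f i < length ys \<and> ys ! f i = xs ! i"
  shows "subseq xs ys"
  using assms
proof (induction xs arbitrary: f ys)
  case (Cons x xs)
  define g where "g i = f (Suc i) - Suc (f 0)" for i
  define vs where "vs = drop (Suc (f 0)) ys"
  have ys: "ys = take (f 0) ys @ x # vs"
    using Cons.prems(2)[rule_format, of 0] id_take_nth_drop[of "f 0" ys] by (simp add: vs_def)
  have f0: "f 0 < f (Suc i)" if "i < length xs" for i
    using Cons.prems(1) that by auto
  have "subseq xs vs"
  proof (rule Cons.IH[of g])
    show "\<forall>i j. i < j \<and> j < length xs \<longrightarrow> g i < g j"
    proof (intro allI impI)
      fix i j assume "i < j \<and> j < length xs"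
      then have "f (Suc i) < f (Suc j)" "f 0 < f (Suc i)" using Cons.prems(1) f0 by auto
      then show "g i < g j" unfolding g_def by linarith
    qed
    show "\<forall>i < length xs. g i < length vs \<and> vs ! g i = xs ! i"
    proof (intro allI impI)
      fix i assume "i < length xs"
      then have "f (Suc i) < length ys" "ys ! f (Suc i) = xs ! i" "f 0 < f (Suc i)"
        using Cons.prems(2)[rule_format, of "Suc i"] f0 by auto
      then show "g i < length vs \<and> vs ! g i = xs ! i" by (simp add: g_def vs_def)
    qed
  qed
  then have "subseq (x # xs) (take (f 0) ys @ x # vs)" by (simp add: list_emb_append2)
  with ys show ?case by argo
qed simp

lemma subseq_iff_nth_embedding:
  "subseq xs ys \<longleftrightarrow>
     (\<exists>f. (\<forall>i j. i < j \<and> j < length xs \<longrightarrow> f i < f j) \<and>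
          (\<forall>i < length xs. f i < length ys \<and> ys ! f i = xs ! i))"
  by (auto intro: subseq_imp_nth_embedding nth_embedding_imp_subseq)

lemma set_subseq_subset: "subseq xs ys \<Longrightarrow> set xs \<subseteq> set ys"
  by (induction rule: list_emb.induct) auto

lemma subseq_rev_iff [simp]: "subseq (rev xs) (rev ys) \<longleftrightarrow> subseq xs ys"
proof -
  have rev_mono: "subseq (rev xs) (rev ys)" if "subseq xs ys" for xs ys :: "'a list"
    using that by (induction rule: list_emb.induct) (auto intro: subseq_rev_drop_many list_emb_append_mono)
  show ?thesis using rev_mono[of "rev xs" "rev ys"] rev_mono[of xs ys] by auto
qed

lemma subseq_pair_append: "y \<in> set A \<Longrightarrow> x \<in> set B \<Longrightarrow> subseq [y, x] (A @ B)"
  using list_emb_append_mono[of "(=)" "[y]" A "[x]" B] by (simp add: subseq_singleton_left)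

lemma sorted_iff_subseq_pairs: "sorted w \<longleftrightarrow> (\<forall>x y. subseq [x, y] w \<longrightarrow> x \<le> y)"
proof (induction w)
  case (Cons a w)
  have "subseq [x, y] (a # w) \<longleftrightarrow> (x = a \<and> y \<in> set w) \<or> subseq [x, y] w" for x y
    by (auto simp: subseq_singleton_left dest: subseq_Cons')
  then show ?case using Cons.IH by auto
qed simp

lemma contains_iff_subseq:
  "contains p w \<longleftrightarrow>
     (\<exists>ys. length ys = length p \<and> subseq ys w \<and>
          (\<forall>i < length p. \<forall>j < length p. (p ! i < p ! j) = (ys ! i < ys ! j)))"
proof
  assume "contains p w"
  then obtain f where f: "occurs_at p w f" unfolding contains_def by blast
  define ys where "ys = map (\<lambda>i. w ! f i) [0..<length p]"
  have "subseq ys w"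
    unfolding subseq_iff_nth_embedding using f by (intro exI[of _ f]) (auto simp: ys_def occurs_at_def)
  then show "\<exists>ys. length ys = length p \<and> subseq ys w \<and>
      (\<forall>i < length p. \<forall>j < length p. (p ! i < p ! j) = (ys ! i < ys ! j))"
    using f by (intro exI[of _ ys]) (auto simp: ys_def occurs_at_def)
next
  assume "\<exists>ys. length ys = length p \<and> subseq ys w \<and>
      (\<forall>i < length p. \<forall>j < length p. (p ! i < p ! j) = (ys ! i < ys ! j))"
  then obtain ys where ys: "length ys = length p" "subseq ys w"
      "\<forall>i < length p. \<forall>j < length p. (p ! i < p ! j) = (ys ! i < ys ! j)"
    by blast
  then obtain f where f: "\<forall>i j. i < j \<and> j < length ys \<longrightarrow> f i < f j"
      "\<forall>i < length ys. f i < length w \<and> w ! f i = ys ! i"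
    unfolding subseq_iff_nth_embedding by blast
  have "occurs_at p w f" unfolding occurs_at_def using ys(1,3) f by auto
  then show "contains p w" unfolding contains_def by blast
qed

lemma contains_subseq_mono: "contains p w \<Longrightarrow> subseq w w' \<Longrightarrow> contains p w'"
  unfolding contains_iff_subseq by (blast intro: subseq_order.order_trans)

lemma all_less_2: "(\<forall>i < 2. P i) \<longleftrightarrow> P 0 \<and> P (1::nat)"
  by (auto simp: eval_nat_numeral less_Suc_eq)

lemma ex_length_2: "(\<exists>ys. length ys = 2 \<and> P ys) \<longleftrightarrow> (\<exists>x y. P [x, y])"
proof
  show "\<exists>ys. length ys = 2 \<and> P ys \<Longrightarrow> \<exists>x y. P [x, y]"
    by (auto simp: eval_nat_numeral length_Suc_conv)
  show "\<exists>x y. P [x, y] \<Longrightarrow> \<exists>ys. length ys = 2 \<and> P ys"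
    by force
qed

lemma all_less_3: "(\<forall>i < 3. P i) \<longleftrightarrow> P 0 \<and> P 1 \<and> P (2::nat)"
  by (auto simp: eval_nat_numeral less_Suc_eq)

lemma ex_length_3: "(\<exists>ys. length ys = 3 \<and> P ys) \<longleftrightarrow> (\<exists>x y z. P [x, y, z])"
proof
  show "\<exists>ys. length ys = 3 \<and> P ys \<Longrightarrow> \<exists>x y z. P [x, y, z]"
    by (auto simp: eval_nat_numeral length_Suc_conv)
  show "\<exists>x y z. P [x, y, z] \<Longrightarrow> \<exists>ys. length ys = 3 \<and> P ys"
    by force
qed

lemma contains_21_iff: "contains [2, 1] w \<longleftrightarrow> (\<exists>x y. subseq [x, y] w \<and> y < x)"
  unfolding contains_iff_subseq length_Cons list.size(3) numeral_2_eq_2[symmetric] ex_length_2 all_less_2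
  by (intro ex_cong1) auto

lemma contains_length3_iff:
  "contains [p, q, r] w \<longleftrightarrow>
     (\<exists>x y z. subseq [x, y, z] w \<and> (p < q \<longleftrightarrow> x < y) \<and> (p < r \<longleftrightarrow> x < z) \<and>
        (q < p \<longleftrightarrow> y < x) \<and> (q < r \<longleftrightarrow> y < z) \<and> (r < p \<longleftrightarrow> z < x) \<and> (r < q \<longleftrightarrow> z < y))"
  unfolding contains_iff_subseq length_Cons list.size(3) numeral_3_eq_3[symmetric] ex_length_3 all_less_3
  by simp

lemma contains_123_iff: "contains [1, 2, 3] w \<longleftrightarrow> (\<exists>x y z. subseq [x, y, z] w \<and> x < y \<and> y < z)"
  unfolding contains_length3_iff by (intro ex_cong1) auto

lemma contains_132_iff: "contains [1, 3, 2] w \<longleftrightarrow> (\<exists>x y z. subseq [x, y, z] w \<and> x < z \<and> z < y)"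
  unfolding contains_length3_iff by (intro ex_cong1) auto

lemma contains_231_iff: "contains [2, 3, 1] w \<longleftrightarrow> (\<exists>x y z. subseq [x, y, z] w \<and> z < x \<and> x < y)"
  unfolding contains_length3_iff by (intro ex_cong1) auto

lemma contains_231_rev_iff: "contains [2, 3, 1] (rev w) \<longleftrightarrow> contains [1, 3, 2] w"
proof -
  have "subseq [x, y, z] (rev w) \<longleftrightarrow> subseq [z, y, x] w" for x y z
    using subseq_rev_iff[of "[z, y, x]" w] by simp
  then show ?thesis unfolding contains_231_iff contains_132_iff by blast
qed

section \<open>The pattern-avoiding stack machine\<close>

text \<open>\<open>pops ok x st\<close> is the pair (entries popped when \<open>x\<close> is read, remaining stack);
  \<open>run ok xs st\<close> is the pair (output, stack) after reading \<open>xs\<close>, before the final flush.\<close>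

fun pops :: "(nat list \<Rightarrow> bool) \<Rightarrow> nat \<Rightarrow> nat list \<Rightarrow> nat list \<times> nat list" where
  "pops ok x [] = ([], [])"
| "pops ok x (y # st) =
     (if ok (x # y # st) then ([], y # st) else apfst ((#) y) (pops ok x st))"

fun run :: "(nat list \<Rightarrow> bool) \<Rightarrow> nat list \<Rightarrow> nat list \<Rightarrow> nat list \<times> nat list" where
  "run ok [] st = ([], st)"
| "run ok (x # xs) st =
     (let (p, r) = pops ok x st in apfst ((@) p) (run ok xs (x # r)))"

lemma sc_Cons_pops: "sc ok (x # xs) st = fst (pops ok x st) @ sc ok xs (x # snd (pops ok x st))"
  by (induction st) (auto split: prod.split)

lemma pops_append: "fst (pops ok x st) @ snd (pops ok x st) = st"
  by (induction st) (auto split: prod.split)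

lemma pops_ok: "snd (pops ok x st) = [] \<or> ok (x # snd (pops ok x st))"
  by (induction st) (auto split: prod.split)

lemma sc_append: "sc ok (xs @ ys) st = fst (run ok xs st) @ sc ok ys (snd (run ok xs st))"
  by (induction xs arbitrary: st) (auto simp: sc_Cons_pops split: prod.split)

lemma mset_sc: "mset (sc ok xs st) = mset xs + mset st"
  by (induction ok xs st rule: sc.induct) auto

lemma subseq_stack_sc: "subseq st (sc ok xs st)"
  by (induction ok xs st rule: sc.induct) (auto intro: subseq_order.order_trans)

lemma pops_above_floor:
  assumes "B \<noteq> []" "ok (x # B)"
  obtains A1 A2 where "A = A1 @ A2" "pops ok x (A @ B) = (A1, A2 @ B)"
  using assms
proof (induction A arbitrary: thesis)
  case Nil
  then show ?case by (cases B) auto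
next
  case (Cons y A)
  then obtain A1 A2 where "A = A1 @ A2" "pops ok x (A @ B) = (A1, A2 @ B)" by blast
  with Cons.prems(1)[of "[]" "y # A"] Cons.prems(1)[of "y # A1" A2] show ?case
    by (cases "ok (x # y # A @ B)") auto
qed

lemma run_above_floor:
  assumes "B \<noteq> []" "\<forall>x\<in>set xs. ok (x # B)"
  obtains U' where "snd (run ok xs (U @ B)) = U' @ B" "set U' \<subseteq> set xs \<union> set U"
  using assms
proof (induction xs arbitrary: U thesis)
  case Nil
  then show ?case by auto
next
  case (Cons x xs)
  obtain A1 A2 where A: "U = A1 @ A2" "pops ok x (U @ B) = (A1, A2 @ B)"
    using pops_above_floor[of B ok x U] Cons.prems by auto
  obtain U' where "snd (run ok xs ((x # A2) @ B)) = U' @ B" "set U' \<subseteq> set xs \<union> set (x # A2)"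
    using Cons.IH[of "x # A2"] Cons.prems(2,3) by auto
  with A Cons.prems(1) show ?case by (auto simp: case_prod_beta)
qed

lemma subseq_rev_stack_run: "subseq (rev (snd (run ok xs st))) (rev st @ xs)"
proof (induction xs arbitrary: st)
  case Nil
  then show ?case by simp
next
  case (Cons x xs)
  have "subseq (snd (pops ok x st)) st"
    using pops_append[of ok x st] by (metis list_emb_append2 subseq_order.order_refl)
  then have "subseq (rev (x # snd (pops ok x st)) @ xs) (rev st @ x # xs)"
    by (simp add: list_emb_append_mono)
  then show ?case using Cons[of "x # snd (pops ok x st)"]
    by (auto split: prod.split intro: subseq_order.order_trans)
qed

lemma sc_push_all:
  assumes "\<And>pre x suf. xs = pre @ x # suf \<Longrightarrow> ok (x # rev pre @ st)"
  shows "sc ok xs st = rev xs @ st"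
  using assms
proof (induction xs arbitrary: st)
  case Nil
  then show ?case by simp
next
  case (Cons x xs)
  have "ok (x # st)" using Cons.prems[of "[]" x xs] by simp
  then have "sc ok (x # xs) st = sc ok xs (x # st)" by (cases st) auto
  also have "\<dots> = rev xs @ x # st"
    using Cons.prems[of "x # _"] by (intro Cons.IH) auto
  finally show ?case by simp
qed

section \<open>West's stack-sorting map\<close>

lemma contains_vinc_empty: "contains_vinc p {} w \<longleftrightarrow> contains p w"
  by (simp add: contains_vinc_def contains_def)

lemma west_s_eq: "west_s w = sc sorted w []"
proof -
  have "contains_vinc [2, 1] {} st \<longleftrightarrow> \<not> sorted st" for st
    unfolding contains_vinc_empty contains_21_iff sorted_iff_subseq_pairs by (auto simp: not_le)
  then show ?thesis unfolding west_s_def SC_def by simp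
qed

lemma pops_sorted_less: "sorted st \<Longrightarrow> y \<in> set (fst (pops sorted x st)) \<Longrightarrow> y < x"
proof (induction st)
  case (Cons z st)
  show ?case
  proof (cases "sorted (x # z # st)")
    case False
    then have "z < x" using Cons.prems(1) by auto
    then show ?thesis using Cons False by auto
  qed (use Cons.prems in simp)
qed simp

lemma sorted_pops_sorted: "sorted (x # snd (pops sorted x st))"
  using pops_ok[of sorted x st] by auto

lemma subseq_sc_popped_before:
  assumes "y \<in> set (fst (pops ok x' st))" "x \<in> set xs"
  shows "subseq [y, x] (sc ok (x' # xs) st)"
  unfolding sc_Cons_pops using assms mset_sc[of ok xs "x' # snd (pops ok x' st)"]
  by (intro subseq_pair_append) (auto dest: arg_cong[of _ _ set_mset])

lemma subseq_sc_Cons: "subseq w (sc ok xs (x' # snd (pops ok x' st))) \<Longrightarrow> subseq w (sc ok (x' # xs) st)"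
  unfolding sc_Cons_pops by (rule list_emb_append2)

lemma sorted_sc_sorted:
  assumes "sorted st" "\<not> contains [2, 3, 1] xs" "\<forall>y\<in>set st. \<not> contains [2, 3, 1] (y # xs)"
  shows "sorted (sc sorted xs st)"
  using assms
proof (induction xs arbitrary: st)
  case (Cons x xs)
  define p where "p = fst (pops sorted x st)"
  define r where "r = snd (pops sorted x st)"
  have st: "st = p @ r" using pops_append[of sorted x st] by (simp add: p_def r_def)
  have "sorted (sc sorted xs (x # r))"
  proof (rule Cons.IH)
    show "sorted (x # r)" unfolding r_def by (rule sorted_pops_sorted)
    show "\<not> contains [2, 3, 1] xs"
      using Cons.prems(2) contains_subseq_mono[of _ xs "x # xs"] by auto
    have "\<not> contains [2, 3, 1] (y # xs)" if "y \<in> set r" for y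
      using Cons.prems(3) that st contains_subseq_mono[of _ "y # xs" "y # x # xs"] by auto
    then show "\<forall>y\<in>set (x # r). \<not> contains [2, 3, 1] (y # xs)" using Cons.prems(2) by auto
  qed
  moreover have "u \<le> v" if u: "u \<in> set p" and v: "v \<in> set (sc sorted xs (x # r))" for u v
  proof -
    have "u < x" using pops_sorted_less[OF Cons.prems(1)] u by (simp add: p_def)
    have "v \<in> set xs \<or> v = x \<or> v \<in> set r" using v mset_sc[of sorted xs "x # r"]
      by (auto dest: arg_cong[of _ _ set_mset])
    moreover have "\<not> v < u" if "v \<in> set xs"
    proof
      assume "v < u"
      have "subseq [u, x, v] (u # x # xs)" using that by (simp add: subseq_singleton_left)
      then have "contains [2, 3, 1] (u # x # xs)"
        unfolding contains_231_iff using \<open>v < u\<close> \<open>u < x\<close> by blast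
      then show False using Cons.prems(3) st u by auto
    qed
    ultimately show "u \<le> v" using \<open>u < x\<close> Cons.prems(1) st u by (auto simp: sorted_append)
  qed
  moreover have "sorted p" using Cons.prems(1) st by (simp add: sorted_append)
  ultimately show ?case by (simp add: sc_Cons_pops p_def[symmetric] r_def[symmetric] sorted_append)
qed simp

lemma sc_sorted_outputs_stacked_before:
  assumes "y \<in> set st" "subseq [z, x] xs" "y < z"
  shows "subseq [y, x] (sc sorted xs st)"
  using assms
proof (induction xs arbitrary: st)
  case (Cons x' xs)
  define p where "p = fst (pops sorted x' st)"
  define r where "r = snd (pops sorted x' st)"
  have st: "st = p @ r" using pops_append[of sorted x' st] by (simp add: p_def r_def)
  show ?case
  proof (cases "y \<in> set p")
    case True
    have "x \<in> set xs" using Cons.prems(2) set_subseq_subset[of "[z, x]" xs]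
      by (auto simp: subseq_singleton_left split: if_splits)
    with True show ?thesis unfolding p_def by (rule subseq_sc_popped_before)
  next
    case False
    then have "y \<in> set r" using Cons.prems(1) st by simp
    have "subseq [z, x] xs"
    proof (rule ccontr)
      assume "\<not> subseq [z, x] xs"
      then have "z = x'" using Cons.prems(2) by (auto split: if_splits)
      then show False
        using sorted_pops_sorted[of x' st] \<open>y \<in> set r\<close> Cons.prems(3) by (auto simp: r_def)
    qed
    then show ?thesis
      using Cons.IH[of "x' # r"] \<open>y \<in> set r\<close> Cons.prems(3) subseq_sc_Cons by (simp add: r_def)
  qed
qed simp

lemma sc_sorted_outputs_before:
  assumes "subseq [y, z, x] xs" "y < z"
  shows "subseq [y, x] (sc sorted xs st)"
  using assms
proof (induction xs arbitrary: st rule: list.induct)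
  case (Cons x' xs)
  have "subseq [y, x] (sc sorted xs (x' # snd (pops sorted x' st)))"
  proof (cases "subseq [y, z, x] xs")
    case True
    then show ?thesis using Cons.IH Cons.prems(2) by blast
  next
    case False
    then have "y = x'" "subseq [z, x] xs" using Cons.prems(1) by (auto split: if_splits)
    then show ?thesis using sc_sorted_outputs_stacked_before Cons.prems(2) by simp
  qed
  then show ?case by (rule subseq_sc_Cons)
qed simp

theorem sorted_west_s_iff: "sorted (west_s w) \<longleftrightarrow> \<not> contains [2, 3, 1] w"
proof (intro iffI notI)
  assume "sorted (west_s w)" "contains [2, 3, 1] w"
  then obtain x y z where "subseq [x, y, z] w" "z < x" "x < y"
    unfolding contains_231_iff by blast
  then have "subseq [x, z] (west_s w)"
    unfolding west_s_eq by (intro sc_sorted_outputs_before[of x y])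
  with \<open>sorted (west_s w)\<close> \<open>z < x\<close> show False
    unfolding sorted_iff_subseq_pairs by (meson leD)
qed (auto simp: west_s_eq intro: sorted_sc_sorted)

section \<open>The vincular pattern 3_21\<close>

lemma occurs_at_length3_iff:
  "occurs_at [p, q, r] w f \<longleftrightarrow>
     f 0 < f 1 \<and> f 1 < f 2 \<and> f 2 < length w \<and>
     (p < q \<longleftrightarrow> w ! f 0 < w ! f 1) \<and> (p < r \<longleftrightarrow> w ! f 0 < w ! f 2) \<and>
     (q < p \<longleftrightarrow> w ! f 1 < w ! f 0) \<and> (q < r \<longleftrightarrow> w ! f 1 < w ! f 2) \<and>
     (r < p \<longleftrightarrow> w ! f 2 < w ! f 0) \<and> (r < q \<longleftrightarrow> w ! f 2 < w ! f 1)"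
proof -
  have all3: "(\<forall>i < length [p, q, r]. P i) \<longleftrightarrow> P 0 \<and> P 1 \<and> P 2" for P :: "nat \<Rightarrow> bool"
    by (auto simp: numeral_2_eq_2 less_Suc_eq)
  have "(\<forall>i j. i < j \<and> j < length [p, q, r] \<longrightarrow> f i < f j) \<longleftrightarrow> f 0 < f 1 \<and> f 1 < f 2"
    by (auto simp: numeral_2_eq_2 less_Suc_eq)
  then show ?thesis
    unfolding occurs_at_def all3 by (simp add: numeral_2_eq_2) (meson order.strict_trans)
qed

definition has_3_21 :: "'a::linorder list \<Rightarrow> bool" where
  "has_3_21 w \<longleftrightarrow> (\<exists>us b a ws. w = us @ b # a # ws \<and> a < b \<and> (\<exists>c\<in>set us. b < c))"

lemma contains_vinc_3_21_iff: "contains_vinc [3, 2, 1] {1} w \<longleftrightarrow> has_3_21 w"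
proof
  assume "contains_vinc [3, 2, 1] {1} w"
  then obtain f where f: "occurs_at [3, 2, 1] w f" "f 2 = Suc (f 1)"
    unfolding contains_vinc_def by (auto simp: numeral_2_eq_2)
  then have pos: "f 0 < f 1" "Suc (f 1) < length w"
    and val: "w ! Suc (f 1) < w ! f 1" "w ! f 1 < w ! f 0"
    unfolding occurs_at_length3_iff by simp_all
  have "w = take (f 1) w @ w ! f 1 # w ! Suc (f 1) # drop (Suc (Suc (f 1))) w"
    using pos(2) by (simp add: Cons_nth_drop_Suc)
  moreover have "w ! f 0 \<in> set (take (f 1) w)"
    using pos by (auto simp: in_set_conv_nth intro: exI[of _ "f 0"])
  ultimately show "has_3_21 w" unfolding has_3_21_def using val by blast
next
  assume "has_3_21 w"
  then obtain us b a ws c where w: "w = us @ b # a # ws" "a < b" "c \<in> set us" "b < c"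
    unfolding has_3_21_def by blast
  then obtain i where i: "i < length us" "us ! i = c" by (auto simp: in_set_conv_nth)
  define f where "f k = (if k = 0 then i else if k = 1 then length us else Suc (length us))" for k :: nat
  have "occurs_at [3, 2, 1] w f"
    unfolding occurs_at_length3_iff f_def using w i by (auto simp: nth_append)
  moreover have "f 2 = Suc (f 1)" by (simp add: f_def)
  ultimately show "contains_vinc [3, 2, 1] {1} w"
    unfolding contains_vinc_def by (auto simp: numeral_2_eq_2)
qed

lemma not_has_3_21_singleton: "\<not> has_3_21 [x]"
  unfolding has_3_21_def by (auto simp: Cons_eq_append_conv)

lemma has_3_21_Cons:
  "has_3_21 (x # w) \<longleftrightarrow> has_3_21 w \<or> (\<exists>us b a ws. w = us @ b # a # ws \<and> a < b \<and> b < x)"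
proof
  assume "has_3_21 (x # w)"
  then obtain us b a ws c where "x # w = us @ b # a # ws" "a < b" "c \<in> set us" "b < c"
    unfolding has_3_21_def by blast
  then obtain us' where "us = x # us'" "w = us' @ b # a # ws" "c = x \<or> c \<in> set us'"
    by (cases us) auto
  then show "has_3_21 w \<or> (\<exists>us b a ws. w = us @ b # a # ws \<and> a < b \<and> b < x)"
    unfolding has_3_21_def using \<open>a < b\<close> \<open>b < c\<close> by blast
next
  assume "has_3_21 w \<or> (\<exists>us b a ws. w = us @ b # a # ws \<and> a < b \<and> b < x)"
  then show "has_3_21 (x # w)"
    unfolding has_3_21_def by (metis append_Cons list.set_intros)
qed

lemma has_3_21_Cons_lower:
  assumes "\<forall>e\<in>set w. x \<le> e"
  shows "has_3_21 (x # w) \<longleftrightarrow> has_3_21 w"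
proof -
  have "\<not> (\<exists>us b a ws. w = us @ b # a # ws \<and> a < b \<and> b < x)"
    using assms by fastforce
  then show ?thesis unfolding has_3_21_Cons by blast
qed

lemma not_has_3_21_push_below_top:
  assumes good: "\<not> has_3_21 (b # w)" and "x \<le> b"
  shows "\<not> has_3_21 (x # b # w)"
proof
  assume "has_3_21 (x # b # w)"
  then obtain us d e ws where split: "b # w = us @ d # e # ws" "e < d" "d < x"
    using good unfolding has_3_21_Cons[of x] by blast
  show False
  proof (cases us)
    case Nil
    then show False using split \<open>x \<le> b\<close> by simp
  next
    case (Cons u us')
    then have "w = us' @ d # e # ws" "d < b" using split \<open>x \<le> b\<close> by auto
    then show False using good split(2) unfolding has_3_21_Cons[of b] by blast
  qed
qed

abbreviation sc_3_21 :: "nat list \<Rightarrow> nat list \<Rightarrow> nat list" where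
  "sc_3_21 \<equiv> sc (\<lambda>st. \<not> has_3_21 st)"

lemma SC_3_21_eq: "SC_3_21 \<tau> = sc_3_21 \<tau> []"
  unfolding SC_3_21_def SC_def contains_vinc_3_21_iff ..

lemma contains_123_if_has_3_21_rev:
  assumes "has_3_21 (rev w)"
  shows "contains [1, 2, 3] w"
proof -
  obtain us b a ws c where w: "rev w = us @ b # a # ws" "a < b" "c \<in> set us" "b < c"
    using assms unfolding has_3_21_def by blast
  have "w = rev ws @ a # b # rev us" using arg_cong[OF w(1), of rev] by simp
  moreover have "subseq [c] (rev us)" using w(3) by (simp add: subseq_singleton_left)
  ultimately have "subseq [a, b, c] w" by (simp add: list_emb_append2)
  then show ?thesis unfolding contains_123_iff using \<open>a < b\<close> \<open>b < c\<close> by blast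
qed

lemma SC_3_21_eq_rev:
  assumes "\<not> contains [1, 2, 3] \<tau>"
  shows "SC_3_21 \<tau> = rev \<tau>"
proof -
  have "\<not> has_3_21 (x # rev pre @ [])" if "\<tau> = pre @ x # suf" for pre x suf
  proof
    assume "has_3_21 (x # rev pre @ [])"
    then have "contains [1, 2, 3] (pre @ [x])" by (intro contains_123_if_has_3_21_rev) simp
    moreover have "subseq (pre @ [x]) \<tau>" using that by (simp add: prefix_imp_subseq)
    ultimately have "contains [1, 2, 3] \<tau>" by (rule contains_subseq_mono)
    with assms show False ..
  qed
  then show ?thesis unfolding SC_3_21_eq by (subst sc_push_all) auto
qed

section \<open>Permutations containing 123 or 132\<close>

definition two_larger_after :: "'a::linorder \<Rightarrow> 'a list \<Rightarrow> bool" where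
  "two_larger_after v w \<longleftrightarrow> (\<exists>x y. subseq [x, y] w \<and> v < x \<and> v < y)"

lemma two_larger_after_if_contains_123_or_132:
  assumes "contains [1, 2, 3] w \<or> contains [1, 3, 2] w"
  shows "\<exists>us v vs. w = us @ v # vs \<and> two_larger_after v vs"
proof -
  obtain x y z where "subseq [x, y, z] w" "x < y" "x < z"
    using assms unfolding contains_123_iff contains_132_iff by (auto dest: less_trans)
  then show ?thesis unfolding two_larger_after_def by (blast dest: list_emb_ConsD)
qed

definition leftmost_two_larger :: "'a::linorder list \<Rightarrow> 'a \<Rightarrow> 'a list \<Rightarrow> bool" where
  "leftmost_two_larger P a Rest \<longleftrightarrow> two_larger_after a Rest \<and>
     (\<forall>P1 v P2. P = P1 @ v # P2 \<longrightarrow> \<not> two_larger_after v (P2 @ a # Rest))"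

lemma obtain_leftmost_two_larger:
  assumes "\<exists>us v vs. w = us @ v # vs \<and> two_larger_after v vs"
  obtains P a Rest where "w = P @ a # Rest" "leftmost_two_larger P a Rest"
  using assms
proof (induction w arbitrary: thesis)
  case (Cons t w)
  show ?case
  proof (cases "two_larger_after t w")
    case True
    then show ?thesis using Cons.prems(1)[of "[]" t w] by (simp add: leftmost_two_larger_def)
  next
    case False
    then have "\<exists>us v vs. w = us @ v # vs \<and> two_larger_after v vs"
      using Cons.prems(2) by (auto simp: Cons_eq_append_conv)
    then obtain P a Rest where "w = P @ a # Rest" "leftmost_two_larger P a Rest"
      using Cons.IH by blast
    with False show ?thesis
      using Cons.prems(1)[of "t # P" a Rest] by (auto simp: leftmost_two_larger_def Cons_eq_append_conv)
  qed
qed simp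

lemma first_two_larger:
  assumes "two_larger_after a w"
  obtains M b N c R where "w = M @ b # N @ c # R" "a < b" "a < c"
    "\<forall>x\<in>set M. x \<le> a" "\<forall>x\<in>set N. x \<le> a"
  using assms
proof (induction w arbitrary: thesis)
  case Nil
  then show ?case by (simp add: two_larger_after_def)
next
  case (Cons r w)
  show ?case
  proof (cases "a < r")
    case True
    obtain x y where "subseq [x, y] (r # w)" "a < y"
      using Cons.prems(2) unfolding two_larger_after_def by blast
    then have "\<exists>y\<in>set w. a < y"
      using set_subseq_subset[of "[x, y]" w] by (auto simp: subseq_singleton_left split: if_splits)
    then obtain N c R where "w = N @ c # R" "a < c" "\<forall>x\<in>set N. \<not> a < x"
      using split_list_first_prop[of w "\<lambda>y. a < y"] by blast
    with True show ?thesis using Cons.prems(1)[of "[]" r N c R] by (auto simp: not_less)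
  next
    case False
    then have "two_larger_after a w"
      using Cons.prems(2) unfolding two_larger_after_def by (auto split: if_splits)
    then obtain M b N c R where "w = M @ b # N @ c # R" "a < b" "a < c"
      "\<forall>x\<in>set M. x \<le> a" "\<forall>x\<in>set N. x \<le> a"
      using Cons.IH by blast
    with False show ?thesis using Cons.prems(1)[of "r # M" b N c R] by auto
  qed
qed

lemma stack_below_leftmost_larger:
  assumes "subseq (rev L) P" "distinct (P @ a # Rest)" "leftmost_two_larger P a Rest"
    and "e \<in> set L"
  shows "a < e"
proof -
  have leftmost: "\<not> two_larger_after v (P2 @ a # Rest)" if "P = P1 @ v # P2" for P1 v P2
    using assms(3) that unfolding leftmost_two_larger_def by blast
  have "e \<in> set P" using set_subseq_subset[OF assms(1)] assms(4) by auto
  then obtain P1 P2 where P: "P = P1 @ e # P2" by (meson split_list)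
  obtain u v where "subseq [u, v] Rest" "a < u"
    using assms(3) unfolding leftmost_two_larger_def two_larger_after_def by blast
  then have "subseq [a, u] (P2 @ a # Rest)"
    by (intro list_emb_append2) (auto simp: subseq_singleton_left dest: set_subseq_subset)
  then have "\<not> e < a" using leftmost[OF P] \<open>a < u\<close> unfolding two_larger_after_def by force
  moreover have "e \<noteq> a" using assms(2) \<open>e \<in> set P\<close> by auto
  ultimately show "a < e" by simp
qed

text \<open>A descent \<open>d e\<close> of the stack below \<open>a\<close> was read as \<open>e\<close> before \<open>d\<close>; if \<open>d < y\<close>
  for a later entry \<open>y\<close>, then \<open>e\<close> would be an entry left of \<open>a\<close> with two larger entries after it.\<close>

lemma not_has_3_21_push_onto_leftmost:
  assumes "subseq (rev L) P" "\<forall>e\<in>set L. a < e" "\<not> has_3_21 (a # L)"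
    and "leftmost_two_larger P a Rest" "y \<in> set Rest"
  shows "\<not> has_3_21 (y # a # L)"
proof
  have leftmost: "\<not> two_larger_after v (P2 @ a # Rest)" if "P = P1 @ v # P2" for P1 v P2
    using assms(4) that unfolding leftmost_two_larger_def by blast
  assume "has_3_21 (y # a # L)"
  then obtain us d e ws where split: "a # L = us @ d # e # ws" "e < d" "d < y"
    using assms(3) unfolding has_3_21_Cons[of y] by blast
  show False
  proof (cases us)
    case Nil
    then show False using split assms(2) by auto
  next
    case (Cons u us')
    then have "rev L = rev ws @ e # d # rev us'" using split(1) by simp
    then have "subseq [e, d] (rev L)" by (simp add: list_emb_append2 subseq_singleton_left)
    then have "subseq [e, d] P" using assms(1) by (rule subseq_order.order_trans)
    then obtain P1 P2 where P: "P = P1 @ e # P2" and "d \<in> set P2"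
      by (auto simp: subseq_singleton_left dest!: list_emb_ConsD)
    then have "subseq [d, y] (P2 @ a # Rest)"
      using \<open>y \<in> set Rest\<close> by (intro subseq_pair_append) auto
    then show False
      using leftmost[OF P] split(2,3) unfolding two_larger_after_def by (meson less_trans)
  qed
qed

lemma stack_on_leftmost_entry:
  assumes "distinct (P @ a # Rest)" "leftmost_two_larger P a Rest"
  obtains L where "suffix (sc_3_21 Rest (a # L)) (sc_3_21 (P @ a # Rest) [])"
    "\<not> has_3_21 (a # L)" "\<forall>e\<in>set L. a < e" "\<forall>y\<in>set Rest. \<not> has_3_21 (y # a # L)"
proof -
  let ?ok = "\<lambda>st. \<not> has_3_21 st"
  define L0 where "L0 = snd (run ?ok P [])"
  define L where "L = snd (pops ?ok a L0)"
  have "subseq (rev L) (rev L0)"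
    using pops_append[of ?ok a L0] by (metis L_def list_emb_append2 subseq_order.order_refl subseq_rev_iff)
  moreover have "subseq (rev L0) P" using subseq_rev_stack_run[of ?ok P "[]"] by (simp add: L0_def)
  ultimately have L_in_P: "subseq (rev L) P" by (rule subseq_order.order_trans)
  have "suffix (sc_3_21 Rest (a # L)) (sc_3_21 (P @ a # Rest) [])"
    using sc_append[of ?ok P "a # Rest" "[]"] sc_Cons_pops[of ?ok a Rest L0]
    by (simp add: L0_def L_def suffix_def)
  moreover have good_a: "\<not> has_3_21 (a # L)"
    using pops_ok[of ?ok a L0] by (auto simp: L_def not_has_3_21_singleton)
  moreover have above: "\<forall>e\<in>set L. a < e"
    using stack_below_leftmost_larger[OF L_in_P assms] by blast
  moreover have "\<forall>y\<in>set Rest. \<not> has_3_21 (y # a # L)"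
    using not_has_3_21_push_onto_leftmost[OF L_in_P above good_a assms(2)] by blast
  ultimately show thesis using that by blast
qed

lemma stack_when_second_larger_arrives:
  assumes "\<not> has_3_21 (a # L)" "\<forall>e\<in>set L. a \<le> e"
    and "\<forall>x\<in>set M. x \<le> a" "\<forall>x\<in>set N. x \<le> a" "a < b" "\<not> has_3_21 (b # a # L)"
  obtains U V where "suffix (sc_3_21 (c # R) (V @ b # U @ a # L)) (sc_3_21 (M @ b # N @ c # R) (a # L))"
    "\<forall>x\<in>set U. x \<le> a" "\<not> has_3_21 (b # U @ a # L)"
proof -
  let ?ok = "\<lambda>st. \<not> has_3_21 st"
  have "\<forall>x\<in>set M. ?ok (x # a # L)"
    using assms(1-3) has_3_21_Cons_lower[of "a # L"] by fastforce
  then obtain U0 where U0: "snd (run ?ok M ([] @ a # L)) = U0 @ a # L" "set U0 \<subseteq> set M"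
    using run_above_floor[of "a # L" M ?ok "[]"] by auto
  obtain A1 U where U: "U0 = A1 @ U" "pops ?ok b (U0 @ a # L) = (A1, U @ a # L)"
    using pops_above_floor[of "a # L" ?ok b U0] assms(6) by auto
  have good_b: "?ok (b # U @ a # L)"
    using pops_ok[of ?ok b "U0 @ a # L"] U(2) by simp
  have "\<forall>x\<in>set N. ?ok (x # b # U @ a # L)"
    using assms(4,5) good_b not_has_3_21_push_below_top by fastforce
  then obtain V where V: "snd (run ?ok N ([] @ b # U @ a # L)) = V @ b # U @ a # L"
    using run_above_floor[of "b # U @ a # L" N ?ok "[]"] by fastforce
  have out: "sc_3_21 (M @ b # N @ c # R) (a # L) =
      fst (run ?ok M (a # L)) @ A1 @ fst (run ?ok N (b # U @ a # L)) @ sc_3_21 (c # R) (V @ b # U @ a # L)"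
    using U0(1) U(2) V sc_append[of ?ok M "b # N @ c # R"] sc_Cons_pops[of ?ok b "N @ c # R"]
      sc_append[of ?ok N "c # R"] by simp
  show thesis
  proof (rule that[OF _ _ good_b])
    show "suffix (sc_3_21 (c # R) (V @ b # U @ a # L)) (sc_3_21 (M @ b # N @ c # R) (a # L))"
      unfolding out by (intro suffix_appendI suffix_order.refl)
    show "\<forall>x\<in>set U. x \<le> a" using U0(2) U(1) assms(3) by auto
  qed
qed

lemma contains_231_when_third_below_second:
  assumes "\<not> has_3_21 (b # U @ a # L)" "c < b" "a < c"
  shows "contains [2, 3, 1] (sc_3_21 (c # R) (V @ b # U @ a # L))"
proof -
  let ?ok = "\<lambda>st. \<not> has_3_21 st"
  have "?ok (c # b # U @ a # L)" using assms(1,2) by (simp add: not_has_3_21_push_below_top)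
  then obtain A3 A4 where "pops ?ok c (V @ b # U @ a # L) = (A3, A4 @ b # U @ a # L)"
    using pops_above_floor[of "b # U @ a # L" ?ok c V] by blast
  then have "sc_3_21 (c # R) (V @ b # U @ a # L) = A3 @ sc_3_21 R (c # A4 @ b # U @ a # L)"
    using sc_Cons_pops[of ?ok c R "V @ b # U @ a # L"] by simp
  moreover have "subseq [c, b, a] (c # A4 @ b # U @ a # L)"
    by (simp add: list_emb_append2 subseq_singleton_left)
  ultimately have "subseq [c, b, a] (sc_3_21 (c # R) (V @ b # U @ a # L))"
    by (metis list_emb_append2 subseq_stack_sc subseq_order.order_trans)
  then show ?thesis unfolding contains_231_iff using assms(2,3) by blast
qed

text \<open>Here \<open>c\<close> must pop \<open>b\<close>, which sits on an entry smaller than \<open>b\<close>, but not \<open>a\<close>.\<close>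

lemma contains_231_when_third_above_second:
  assumes "\<forall>x\<in>set U. x \<le> a" "a < b" "b < c" "\<not> has_3_21 (c # a # L)"
  shows "contains [2, 3, 1] (sc_3_21 (c # R) (V @ b # U @ a # L))"
proof -
  let ?ok = "\<lambda>st. \<not> has_3_21 st"
  obtain A5 A6 where A: "V @ b # U = A5 @ A6" "pops ?ok c ((V @ b # U) @ a # L) = (A5, A6 @ a # L)"
    using pops_above_floor[of "a # L" ?ok c "V @ b # U"] assms(4) by blast
  have "b \<in> set A5"
  proof (rule ccontr)
    assume "b \<notin> set A5"
    then obtain us where us: "A6 = us @ b # U"
      using A(1) by (auto simp: append_eq_append_conv2 Cons_eq_append_conv)
    obtain d rest where "U @ a # L = d # rest" "d < b"
      using assms(1,2) by (cases U) auto
    then have "has_3_21 (c # A6 @ a # L)"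
      unfolding us has_3_21_def using assms(3) by (intro exI[of _ "c # us"]) auto
    moreover have "?ok (c # A6 @ a # L)" using pops_ok[of ?ok c "(V @ b # U) @ a # L"] A(2) by simp
    ultimately show False by simp
  qed
  have "sc_3_21 (c # R) (V @ b # U @ a # L) = A5 @ sc_3_21 R (c # A6 @ a # L)"
    using sc_Cons_pops[of ?ok c R "V @ b # U @ a # L"] A(2) by simp
  moreover have "subseq [c, a] (sc_3_21 R (c # A6 @ a # L))"
    using subseq_stack_sc[of "c # A6 @ a # L" ?ok R]
    by (metis list_emb_append2 subseq_Cons2 subseq_order.order_trans subseq_singleton_left list.set_intros(1) append_Cons)
  ultimately have "subseq [b, c, a] (sc_3_21 (c # R) (V @ b # U @ a # L))"
    using \<open>b \<in> set A5\<close> list_emb_append_mono[of "(=)" "[b]" A5 "[c, a]"]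
    by (simp add: subseq_singleton_left)
  then show ?thesis unfolding contains_231_iff using assms(2,3) by blast
qed

theorem SC_3_21_contains_231:
  assumes "distinct \<tau>" "contains [1, 2, 3] \<tau> \<or> contains [1, 3, 2] \<tau>"
  shows "contains [2, 3, 1] (SC_3_21 \<tau>)"
proof -
  obtain P a Rest where \<tau>: "\<tau> = P @ a # Rest" and leftmost: "leftmost_two_larger P a Rest"
    using obtain_leftmost_two_larger two_larger_after_if_contains_123_or_132[OF assms(2)] by blast
  obtain M b N c R where Rest: "Rest = M @ b # N @ c # R" "a < b" "a < c"
    "\<forall>x\<in>set M. x \<le> a" "\<forall>x\<in>set N. x \<le> a"
    using first_two_larger leftmost unfolding leftmost_two_larger_def by blast
  obtain L where L: "suffix (sc_3_21 Rest (a # L)) (sc_3_21 \<tau> [])"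
    "\<not> has_3_21 (a # L)" "\<forall>e\<in>set L. a < e" "\<forall>y\<in>set Rest. \<not> has_3_21 (y # a # L)"
    using stack_on_leftmost_entry[of P a Rest] assms(1) leftmost unfolding \<tau> by blast
  have L_above: "\<forall>e\<in>set L. a \<le> e" using L(3) by auto
  have good_b: "\<not> has_3_21 (b # a # L)" and good_c: "\<not> has_3_21 (c # a # L)"
    using L(4) Rest(1) by auto
  obtain U V where UV: "suffix (sc_3_21 (c # R) (V @ b # U @ a # L)) (sc_3_21 Rest (a # L))"
    "\<forall>x\<in>set U. x \<le> a" "\<not> has_3_21 (b # U @ a # L)"
    unfolding Rest(1) by (rule stack_when_second_larger_arrives[OF L(2) L_above Rest(4,5,2) good_b])
  have "b \<noteq> c" using assms(1) unfolding \<tau> Rest(1) by auto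
  then have "contains [2, 3, 1] (sc_3_21 (c # R) (V @ b # U @ a # L))"
    using contains_231_when_third_below_second[OF UV(3) _ Rest(3)]
      contains_231_when_third_above_second[OF UV(2) Rest(2) _ good_c] by (meson linorder_neqE)
  moreover have "suffix (sc_3_21 (c # R) (V @ b # U @ a # L)) (SC_3_21 \<tau>)"
    unfolding SC_3_21_eq using UV(1) L(1) by (rule suffix_order.trans)
  ultimately show ?thesis by (rule contains_subseq_mono[OF _ suffix_imp_subseq])
qed

theorem SC_3_21_contains_231_iff:
  assumes "distinct \<tau>"
  shows "contains [2, 3, 1] (SC_3_21 \<tau>) \<longleftrightarrow> contains [1, 2, 3] \<tau> \<or> contains [1, 3, 2] \<tau>"
proof
  assume "contains [2, 3, 1] (SC_3_21 \<tau>)"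
  then show "contains [1, 2, 3] \<tau> \<or> contains [1, 3, 2] \<tau>"
    using SC_3_21_eq_rev contains_231_rev_iff by fastforce
qed (rule SC_3_21_contains_231[OF assms])

lemma upt_eq_iff_sorted:
  assumes "\<tau> \<in> perms n" "mset w = mset \<tau>"
  shows "w = [1..<n + 1] \<longleftrightarrow> sorted w"
proof
  assume "sorted w"
  have "distinct \<tau>" "set \<tau> = set [1..<n + 1]"
    using assms(1) unfolding perms_def set_upt Suc_eq_plus1[symmetric] atLeastLessThanSuc_atLeastAtMost
    by blast+
  then have "mset \<tau> = mset [1..<n + 1]"
    using set_eq_iff_mset_eq_distinct[of \<tau> "[1..<n + 1]"] distinct_upt by blast
  with assms(2) have "mset w = mset [1..<n + 1]" by (rule trans)
  then have "sort [1..<n + 1] = w" using \<open>sorted w\<close> by (rule properties_for_sort)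
  then show "w = [1..<n + 1]" by (simp only: sort_upt)
qed (simp only: sorted_upt)

theorem mainTheorem7:
  fixes n :: nat
  assumes "n \<ge> 1"
  shows "Sort_SC_3_21 n = Av n [[1, 2, 3], [1, 3, 2]]"
proof -
  have "west_s (SC_3_21 \<tau>) = [1..<n + 1] \<longleftrightarrow> \<not> contains [1, 2, 3] \<tau> \<and> \<not> contains [1, 3, 2] \<tau>"
    if \<tau>: "\<tau> \<in> perms n" for \<tau>
  proof -
    have "mset (west_s (SC_3_21 \<tau>)) = mset \<tau>" by (simp add: west_s_eq SC_3_21_eq mset_sc)
    then have "west_s (SC_3_21 \<tau>) = [1..<n + 1] \<longleftrightarrow> \<not> contains [2, 3, 1] (SC_3_21 \<tau>)"
      using upt_eq_iff_sorted[OF \<tau>] sorted_west_s_iff by blast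
    then show ?thesis using SC_3_21_contains_231_iff \<tau> unfolding perms_def by blast
  qed
  then show ?thesis unfolding Sort_SC_3_21_def Av_def list.set ball_simps by blast
qed

end
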